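(* Let $N, s \in \mathbb{N}$ with $\gcd(N, s) = 1$, let $s'$ be the unique integer in $[1,N-1]$ with $s s'\equiv 1 \pmod N$, let $H<P$ be natural numbers, let $\tilde{P}$ be the unique integer in $[0,s-1]$ with $\tilde P\equiv P \pmod s$, and let $g(x)=x+c\in\mathbb{Z}[x]$ where $c$ is the unique integer in $[0,N-1]$ congruent to $s' + s'(P - \tilde{P})$ modulo $N$. Let $r,m,d \in \mathbb{N}$ be arbitrary, and define $f_0, \dots, f_{d-1} \in \mathbb{Z}[x]$ by \[ f_i(x) = \begin{cases} N^{m - \lfloor i/r \rfloor}g(x)^i, & 0 \le i < rm, \\ g(x)^i, & rm \le i < d. \end{cases} \] Let $p_0 \in [P-H, P+H]$ be an integer with $p_0>1$, $p_0^r\mid N$ and $p_0\equiv 1 \pmod s$; write $p_0=sx_0+1$ and let $x' = x_0 - \frac{P - \tilde{P}}{s}$. Then $p_0^{rm} \mid f_i(x')$ for all $0 \leq i < d$. *)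

theory Defs
  imports "HOL-Computational_Algebra.Polynomial" "HOL-Number_Theory.Cong"
begin

definition g_poly :: "int \<Rightarrow> int poly" where
  "g_poly c = [:c, 1:]"

definition f_poly :: "nat \<Rightarrow> nat \<Rightarrow> nat \<Rightarrow> int \<Rightarrow> nat \<Rightarrow> int poly" where
  "f_poly N r m c i =
     (if i < r * m then smult (int N ^ (m - i div r)) (g_poly c ^ i)
      else g_poly c ^ i)"

end

theory Submission
  imports Defs
begin

text \<open>
  Multiplying \<open>c \<equiv> s' (1 + (P - Pt)) (mod N)\<close> by \<open>s\<close> and using \<open>s s' \<equiv> 1\<close> gives
  \<open>s (x' + c) \<equiv> s x0 + 1 = p0 (mod N)\<close>. For \<open>r > 0\<close>, \<open>p0\<close> divides \<open>N\<close> and is prime to \<open>s\<close>, so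
  \<open>p0\<close> divides \<open>g(x') = x' + c\<close>. Hence \<open>f_i(x')\<close> is divisible by
  \<open>p0^(r (m - \<lfloor>i/r\<rfloor>) + i)\<close>, and \<open>r (m - \<lfloor>i/r\<rfloor>) + i \<ge> r m\<close>.
\<close>

lemma power_dvd_power_mult_power:
  fixes q a b :: "'a::comm_semiring_1"
  assumes "q ^ r dvd a" and "q dvd b"
  shows "q ^ (r * m) dvd a ^ (m - i div r) * b ^ i"
proof -
  have "r * m \<le> r * (m - i div r + i div r)"
    by (rule mult_le_mono2) linarith
  also have "\<dots> \<le> r * (m - i div r) + i"
    by (simp add: add_mult_distrib2 mult.commute)
  finally have "q ^ (r * m) dvd q ^ (r * (m - i div r)) * q ^ i"
    by (simp add: le_imp_power_dvd flip: power_add)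
  also have "\<dots> dvd a ^ (m - i div r) * b ^ i"
    using assms by (simp add: power_mult dvd_power_same mult_dvd_mono)
  finally show ?thesis .
qed

lemma f_poly_dvd_at_root_of_g:
  assumes "q ^ r dvd int N" and "q dvd x + c"
  shows "q ^ (r * m) dvd poly (f_poly N r m c i) x"
proof (cases "i < r * m")
  case True
  then show ?thesis
    using power_dvd_power_mult_power[OF assms, of m i]
    by (simp add: f_poly_def g_poly_def poly_power add.commute)
next
  case False
  then have "q ^ (r * m) dvd q ^ i"
    by (simp add: le_imp_power_dvd)
  also have "\<dots> dvd (x + c) ^ i"
    using assms(2) by (rule dvd_power_same)
  finally show ?thesis
    using False by (simp add: f_poly_def g_poly_def poly_power add.commute)
qed

lemma shifted_root_cong:
  fixes s s' c x k n :: int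
  assumes "[s * s' = 1] (mod n)" and "[c = s' + s' * (s * k)] (mod n)"
  shows "[s * (x - k + c) = s * x + 1] (mod n)"
proof -
  have "[s * c = (s * s') * (1 + s * k)] (mod n)"
    using cong_scalar_left[OF assms(2), of s] by (simp add: algebra_simps)
  also have "[(s * s') * (1 + s * k) = 1 + s * k] (mod n)"
    using cong_mult[OF assms(1) cong_refl] by simp
  finally have "[s * x - s * k + s * c = s * x - s * k + (1 + s * k)] (mod n)"
    by (rule cong_add_lcancel[THEN iffD2])
  then show ?thesis
    by (simp add: algebra_simps)
qed

lemma dvd_of_cong_mult:
  fixes p a z n :: int
  assumes "[a * z = p] (mod n)" and "p dvd n" and "coprime p a"
  shows "p dvd z"
proof -
  have "[a * z = p] (mod p)"
    using assms(1,2) by (rule cong_dvd_modulus)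
  then have "p dvd a * z"
    by (simp add: cong_dvd_iff)
  with assms(3) show ?thesis
    by (simp add: coprime_dvd_mult_right_iff)
qed

theorem claim3p4:
  fixes N s H P r m d :: nat
    and s' Pt c p0 x0 :: int
  assumes coprime: "gcd N s = 1"
    and s'_range: "1 \<le> s'" "s' \<le> int N - 1"
    and s'_inv: "[int s * s' = 1] (mod int N)"
    and HP: "H < P"
    and Pt_range: "0 \<le> Pt" "Pt \<le> int s - 1"
    and Pt_cong: "[Pt = int P] (mod int s)"
    and c_range: "0 \<le> c" "c \<le> int N - 1"
    and c_cong: "[c = s' + s' * (int P - Pt)] (mod int N)"
    and p0_range: "int P - int H \<le> p0" "p0 \<le> int P + int H"
    and p0_gt: "p0 > 1"
    and p0_dvd: "p0 ^ r dvd int N"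
    and p0_cong: "[p0 = 1] (mod int s)"
    and x0_def: "p0 = int s * x0 + 1"
  shows "\<forall>i<d. p0 ^ (r * m) dvd
           poly (f_poly N r m c i) (x0 - (int P - Pt) div int s)"
proof (cases "r = 0")
  case False
  define k where "k = (int P - Pt) div int s"
  have "int s dvd int P - Pt"
    using cong_sym[OF Pt_cong] by (simp add: cong_iff_dvd_diff)
  then have sk: "int s * k = int P - Pt"
    by (simp add: k_def)
  have "[int s * (x0 - k + c) = p0] (mod int N)"
    using shifted_root_cong[OF s'_inv, of c k x0] c_cong by (simp add: sk x0_def)
  moreover have "p0 dvd int N"
    using False p0_dvd dvd_power dvd_trans by blast
  moreover have "coprime p0 (int s)"
    using cong_imp_coprime[OF cong_sym[OF p0_cong]] by simp
  ultimately have "p0 dvd x0 - k + c"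
    by (rule dvd_of_cong_mult)
  then show ?thesis
    using p0_dvd f_poly_dvd_at_root_of_g unfolding k_def by blast
qed simp

end
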